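(* Let $f(X)=N(N-1)\sum_{i=1}^{\ell}\beta_i\,t(H_i,X)$ be a subgraph-counting function. Then for all $X,Y\in[0,1]^n$, $$\|\nabla f(X)-\nabla f(Y)\|_1\le C\,\|X-Y\|_1,\qquad C=12\sum_{i=1}^{\ell}|\beta_i|\,|E(H_i)|^2.$$
   Context: $n=\binom N2$; $X\in[0,1]^n$ is identified with a symmetric $N\times N$ matrix with zero diagonal, entries indexed by unordered pairs. For a finite simple graph $H$ on $[m]$, $t(H,X)=\frac{1}{N(N-1)\cdots(N-m+1)}\sum_q\prod_{\{l,l'\}\in E(H)}X_{q_lq_{l'}}$ over injective $q:[m]\to[N]$. For an index $e$, $\partial_ef(X)=\frac12(f(X^{e\leftarrow1})-f(X^{e\leftarrow0}))$ ($X^{e\leftarrow a}$: coordinate $e$ replaced by $a$), $\nabla f(X)=(\partial_ef(X))_e\in\mathbb R^n$. $\|\cdot\|_1$ is the $\ell^1$ norm on $\mathbb R^n$. *)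

theory Defs
  imports "HOL-Library.FuncSet" Complex_Main
begin

text \<open>Coordinates are indexed by unordered pairs {i,j} of distinct vertices in {0..<N}.
  A point X of [0,1]^n is a function on such pairs (values elsewhere are irrelevant).\<close>

definition pairs :: "nat \<Rightarrow> nat set set" where
  "pairs N = {e. e \<subseteq> {..<N} \<and> card e = 2}"

definition in_cube :: "nat \<Rightarrow> (nat set \<Rightarrow> real) \<Rightarrow> bool" where
  "in_cube N X \<longleftrightarrow> (\<forall>e\<in>pairs N. 0 \<le> X e \<and> X e \<le> 1)"

definition simple_graph :: "nat \<Rightarrow> nat set set \<Rightarrow> bool" where
  "simple_graph m E \<longleftrightarrow> E \<subseteq> pairs m"

definition tdens :: "nat \<Rightarrow> nat \<Rightarrow> nat set set \<Rightarrow> (nat set \<Rightarrow> real) \<Rightarrow> real" where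
  "tdens N m E X =
     (\<Sum>q\<in>{q. q \<in> {..<m} \<rightarrow>\<^sub>E {..<N} \<and> inj_on q {..<m}}. \<Prod>e\<in>E. X (q ` e))
     / (\<Prod>k<m. real N - real k)"

definition subgraph_count ::
  "nat \<Rightarrow> nat \<Rightarrow> (nat \<Rightarrow> real) \<Rightarrow> (nat \<Rightarrow> nat) \<Rightarrow> (nat \<Rightarrow> nat set set) \<Rightarrow> (nat set \<Rightarrow> real) \<Rightarrow> real" where
  "subgraph_count N l \<beta> m EH X = real N * (real N - 1) * (\<Sum>i<l. \<beta> i * tdens N (m i) (EH i) X)"

definition discrete_partial :: "((nat set \<Rightarrow> real) \<Rightarrow> real) \<Rightarrow> nat set \<Rightarrow> (nat set \<Rightarrow> real) \<Rightarrow> real" where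
  "discrete_partial f e X = (f (X(e := 1)) - f (X(e := 0))) / 2"

definition l1_dist :: "nat \<Rightarrow> (nat set \<Rightarrow> real) \<Rightarrow> (nat set \<Rightarrow> real) \<Rightarrow> real" where
  "l1_dist N u v = (\<Sum>e\<in>pairs N. \<bar>u e - v e\<bar>)"

end

theory Submission
  imports Defs "HOL-Combinatorics.Transposition"
begin

(* The density t(H,X) is an average over injections q of the monomials prod_{a in E(H)} X(q a).
   With all entries in [0,1] such a product is 1-Lipschitz in l1, and it depends only on the |E(H)|
   pairs q a; so the discrete gradient of one monomial moves by at most |E(H)| times the l1 change of
   X on those pairs. Averaging over q, a fixed edge of H is mapped onto every pair of [N] equally often
   (the symmetric group acts transitively on pairs), so the average change is 2/(N(N-1)) times
   ||X - Y||_1. This yields even the constant 2 sum_i |beta_i| |E(H_i)|^2. *)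

definition inj_maps :: "nat \<Rightarrow> nat \<Rightarrow> (nat \<Rightarrow> nat) set" where
  "inj_maps N m = {q. q \<in> {..<m} \<rightarrow>\<^sub>E {..<N} \<and> inj_on q {..<m}}"

lemma finite_inj_maps: "finite (inj_maps N m)"
  by (rule finite_subset[of _ "{..<m} \<rightarrow>\<^sub>E {..<N}"]) (auto simp: inj_maps_def intro: finite_PiE)

lemma finite_pairs: "finite (pairs N)"
  by (rule finite_subset[of _ "Pow {..<N}"]) (auto simp: pairs_def)

lemma inj_maps_image_pair:
  assumes "a \<in> pairs m" "q \<in> inj_maps N m"
  shows "q ` a \<in> pairs N"
proof -
  have "inj_on q a" using assms by (auto simp: inj_maps_def pairs_def intro: inj_on_subset)
  then show ?thesis using assms by (auto simp: pairs_def inj_maps_def card_image)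
qed

lemma inj_maps_empty: "N < m \<Longrightarrow> inj_maps N m = {}"
  using card_inj[of _ "{..<m}" "{..<N}"] by (fastforce simp: inj_maps_def PiE_iff)

lemma bij_betw_inj_maps_Suc:
  "bij_betw (\<lambda>q. (restrict q {..<m}, q m)) (inj_maps N (Suc m))
     (SIGMA q:inj_maps N m. {..<N} - q ` {..<m})"
proof (rule bij_betw_byWitness[where f' = "\<lambda>(p, y). p(m := y)"])
  show "\<forall>q\<in>inj_maps N (Suc m). (\<lambda>(p, y). p(m := y)) (restrict q {..<m}, q m) = q"
    by (auto simp: inj_maps_def PiE_iff extensional_def fun_eq_iff less_Suc_eq)
  show "\<forall>z\<in>SIGMA q:inj_maps N m. {..<N} - q ` {..<m}. (\<lambda>q. (restrict q {..<m}, q m)) ((\<lambda>(p, y). p(m := y)) z) = z"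
    by (auto simp: inj_maps_def PiE_iff extensional_def fun_eq_iff)
  show "(\<lambda>q. (restrict q {..<m}, q m)) ` inj_maps N (Suc m) \<subseteq> (SIGMA q:inj_maps N m. {..<N} - q ` {..<m})"
  proof (rule image_subsetI)
    fix q assume "q \<in> inj_maps N (Suc m)"
    then have q: "q \<in> {..<Suc m} \<rightarrow>\<^sub>E {..<N}" "inj_on q {..<Suc m}"
      by (auto simp: inj_maps_def)
    have "q m \<notin> q ` {..<m}"
    proof
      assume "q m \<in> q ` {..<m}"
      then obtain x where "x < m" "q m = q x" by auto
      then show False using inj_onD[OF q(2), of m x] by simp
    qed
    with q show "(restrict q {..<m}, q m) \<in> (SIGMA q:inj_maps N m. {..<N} - q ` {..<m})"
      by (auto simp: inj_maps_def PiE_iff inj_on_def)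
  qed
  show "(\<lambda>(p, y). p(m := y)) ` (SIGMA q:inj_maps N m. {..<N} - q ` {..<m}) \<subseteq> inj_maps N (Suc m)"
    by (auto simp: inj_maps_def PiE_iff inj_on_def extensional_def less_Suc_eq)
qed

lemma card_inj_maps: "card (inj_maps N m) = (\<Prod>k<m. N - k)"
proof (induction m)
  case 0
  have "inj_maps N 0 = {\<lambda>_. undefined}" by (auto simp: inj_maps_def PiE_empty_domain)
  then show ?case by simp
next
  case (Suc m)
  have "card (inj_maps N (Suc m)) = card (SIGMA q:inj_maps N m. {..<N} - q ` {..<m})"
    using bij_betw_inj_maps_Suc by (rule bij_betw_same_card)
  also have "\<dots> = (\<Sum>q\<in>inj_maps N m. card ({..<N} - q ` {..<m}))"
    using finite_inj_maps by (simp add: card_SigmaI)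
  also have "\<dots> = (\<Sum>q\<in>inj_maps N m. N - m)"
    by (intro sum.cong refl)
       (auto simp: inj_maps_def PiE_iff card_Diff_subset card_image image_subset_iff)
  finally show ?case using Suc by simp
qed

lemma card_pairs: "2 * real (card (pairs N)) = real N * (real N - 1)"
proof -
  have "card (pairs N) = N choose 2"
    unfolding pairs_def using n_subsets[of "{..<N}" 2] by simp
  moreover have "even (N * (N - 1))" by (cases N) auto
  ultimately have "2 * card (pairs N) = N * (N - 1)" by (simp add: choose_two)
  then have "2 * real (card (pairs N)) = real (N * (N - 1))" by (metis of_nat_mult of_nat_numeral)
  then show ?thesis by (cases N) (auto simp: algebra_simps)
qed

lemma pairs_transitive:
  assumes "e \<in> pairs N" "e' \<in> pairs N"
  obtains \<tau> where "inj \<tau>" "\<tau> ` {..<N} \<subseteq> {..<N}" "\<tau> ` e = e'"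
proof -
  obtain x y where e: "e = {x, y}" "x \<noteq> y" using assms(1) by (auto simp: pairs_def card_2_iff)
  obtain z w where e': "e' = {z, w}" "z \<noteq> w" using assms(2) by (auto simp: pairs_def card_2_iff)
  have N: "x < N" "y < N" "z < N" "w < N" using assms e e' by (auto simp: pairs_def)
  define \<tau> where "\<tau> = transpose (transpose x z y) w \<circ> transpose x z"
  have "\<tau> x = z" "\<tau> y = w" using e e' by (auto simp: \<tau>_def transpose_def)
  moreover have "\<tau> ` {..<N} \<subseteq> {..<N}" using N by (auto simp: \<tau>_def transpose_def)
  ultimately show ?thesis
    using that[of \<tau>] e e' by (auto simp: \<tau>_def inj_compose inj_transpose)
qed

lemma card_inj_maps_image_le:
  assumes a: "a \<subseteq> {..<m}" and e: "e \<in> pairs N" "e' \<in> pairs N"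
  shows "card {q \<in> inj_maps N m. q ` a = e} \<le> card {q \<in> inj_maps N m. q ` a = e'}"
proof -
  obtain \<tau> where \<tau>: "inj \<tau>" "\<tau> ` {..<N} \<subseteq> {..<N}" "\<tau> ` e = e'"
    using pairs_transitive[OF e] .
  let ?F = "\<lambda>q. restrict (\<tau> \<circ> q) {..<m}"
  show ?thesis
  proof (rule card_inj_on_le)
    show "inj_on ?F {q \<in> inj_maps N m. q ` a = e}"
    proof (rule inj_onI)
      fix q q' assume "q \<in> {q \<in> inj_maps N m. q ` a = e}" "q' \<in> {q \<in> inj_maps N m. q ` a = e}"
        and eq: "?F q = ?F q'"
      then have "q \<in> extensional {..<m}" "q' \<in> extensional {..<m}" by (auto simp: inj_maps_def PiE_def)
      moreover have "q i = q' i" if "i < m" for i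
        using fun_cong[OF eq, of i] that \<tau>(1) by (simp add: inj_eq)
      ultimately show "q = q'" by (auto intro: extensionalityI)
    qed
    show "?F ` {q \<in> inj_maps N m. q ` a = e} \<subseteq> {q \<in> inj_maps N m. q ` a = e'}"
      using \<tau> a by (auto simp: inj_maps_def PiE_iff inj_on_def image_comp image_subset_iff)
  qed (simp add: finite_inj_maps)
qed

lemma sum_inj_maps_image_pair:
  assumes a: "a \<in> pairs m" and "m \<le> N"
  shows "real N * (real N - 1) * (\<Sum>q\<in>inj_maps N m. h (q ` a))
       = 2 * (\<Prod>k<m. real N - real k) * (\<Sum>e\<in>pairs N. h e)"
proof -
  define c where "c e = card {q \<in> inj_maps N m. q ` a = e}" for e
  have a_sub: "a \<subseteq> {..<m}" using a by (simp add: pairs_def)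
  have "2 \<le> card {..<m}" using card_mono[OF _ a_sub] a by (simp add: pairs_def)
  then have e0: "{0, 1} \<in> pairs N" using \<open>m \<le> N\<close> by (auto simp: pairs_def)
  have c_const: "c e = c {0, 1}" if "e \<in> pairs N" for e
    using card_inj_maps_image_le[OF a_sub that e0] card_inj_maps_image_le[OF a_sub e0 that]
    unfolding c_def by simp
  have img: "(\<lambda>q. q ` a) ` inj_maps N m \<subseteq> pairs N" using inj_maps_image_pair[OF a] by auto
  have fibres: "(\<Sum>q\<in>inj_maps N m. g (q ` a)) = (\<Sum>e\<in>pairs N. real (c e) * g e)" for g :: "nat set \<Rightarrow> real"
    using sum.group[OF finite_inj_maps finite_pairs img, of "\<lambda>q. g (q ` a)"]
    by (simp add: c_def)
  have "(\<Prod>k<m. real N - real k) = real (card (inj_maps N m))"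
    using \<open>m \<le> N\<close> by (simp add: card_inj_maps of_nat_prod of_nat_diff)
  also have "\<dots> = real (c {0, 1}) * real (card (pairs N))"
    using fibres[of "\<lambda>_. 1"] by (simp add: c_const)
  finally have "(\<Prod>k<m. real N - real k) = real (c {0, 1}) * real (card (pairs N))" .
  moreover have "(\<Sum>q\<in>inj_maps N m. h (q ` a)) = real (c {0, 1}) * (\<Sum>e\<in>pairs N. h e)"
    using fibres[of h] by (simp add: c_const sum_distrib_left)
  ultimately show ?thesis
    by (simp flip: card_pairs)
qed

definition edge_product :: "nat set set \<Rightarrow> (nat \<Rightarrow> nat) \<Rightarrow> (nat set \<Rightarrow> real) \<Rightarrow> real" where
  "edge_product E q X = (\<Prod>a\<in>E. X (q ` a))"

abbreviation gradient_l1_dist ::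
    "nat \<Rightarrow> ((nat set \<Rightarrow> real) \<Rightarrow> real) \<Rightarrow> (nat set \<Rightarrow> real) \<Rightarrow> (nat set \<Rightarrow> real) \<Rightarrow> real" where
  "gradient_l1_dist N f X Y \<equiv>
     l1_dist N (\<lambda>e. discrete_partial f e X) (\<lambda>e. discrete_partial f e Y)"

lemma tdens_eq_lincomb:
  "tdens N m E = (\<lambda>X. \<Sum>q\<in>inj_maps N m. (1 / (\<Prod>k<m. real N - real k)) * edge_product E q X)"
  by (simp add: fun_eq_iff tdens_def inj_maps_def edge_product_def sum_divide_distrib)

lemma subgraph_count_eq_lincomb:
  "subgraph_count N l \<beta> m EH =
     (\<lambda>X. \<Sum>i<l. (real N * (real N - 1) * \<beta> i) * tdens N (m i) (EH i) X)"
  by (simp add: fun_eq_iff subgraph_count_def sum_distrib_left mult.assoc)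

lemma discrete_partial_lincomb:
  "discrete_partial (\<lambda>X. \<Sum>i\<in>I. c i * g i X) e X = (\<Sum>i\<in>I. c i * discrete_partial (g i) e X)"
  by (simp add: discrete_partial_def right_diff_distrib diff_divide_distrib sum_subtractf flip: sum_divide_distrib)

lemma l1_dist_nonneg: "0 \<le> l1_dist N u v"
  by (simp add: l1_dist_def sum_nonneg)

lemma l1_dist_lincomb_le:
  "l1_dist N (\<lambda>e. \<Sum>i\<in>I. c i * u i e) (\<lambda>e. \<Sum>i\<in>I. c i * v i e)
     \<le> (\<Sum>i\<in>I. \<bar>c i\<bar> * l1_dist N (u i) (v i))"
proof -
  have "l1_dist N (\<lambda>e. \<Sum>i\<in>I. c i * u i e) (\<lambda>e. \<Sum>i\<in>I. c i * v i e)
      = (\<Sum>e\<in>pairs N. \<bar>\<Sum>i\<in>I. c i * (u i e - v i e)\<bar>)"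
    by (simp add: l1_dist_def sum_subtractf right_diff_distrib)
  also have "\<dots> \<le> (\<Sum>e\<in>pairs N. \<Sum>i\<in>I. \<bar>c i\<bar> * \<bar>u i e - v i e\<bar>)"
    by (intro sum_mono order.trans[OF sum_abs]) (simp add: abs_mult)
  also have "\<dots> = (\<Sum>i\<in>I. \<bar>c i\<bar> * l1_dist N (u i) (v i))"
    by (simp add: l1_dist_def sum.swap[of _ "pairs N"] sum_distrib_left)
  finally show ?thesis .
qed

lemma gradient_l1_dist_lincomb_le:
  "gradient_l1_dist N (\<lambda>X. \<Sum>i\<in>I. c i * g i X) X Y \<le> (\<Sum>i\<in>I. \<bar>c i\<bar> * gradient_l1_dist N (g i) X Y)"
  unfolding discrete_partial_lincomb by (rule l1_dist_lincomb_le)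

lemma gradient_l1_dist_edge_product_le:
  assumes "finite E" and E: "\<And>a. a \<in> E \<Longrightarrow> q ` a \<in> pairs N"
    and X: "in_cube N X" and Y: "in_cube N Y"
  shows "gradient_l1_dist N (edge_product E q) X Y
           \<le> real (card E) * (\<Sum>a\<in>E. \<bar>X (q ` a) - Y (q ` a)\<bar>)"
proof -
  define F where "F e = \<bar>discrete_partial (edge_product E q) e X - discrete_partial (edge_product E q) e Y\<bar>" for e
  define S where "S = (\<Sum>a\<in>E. \<bar>X (q ` a) - Y (q ` a)\<bar>)"
  have F_eq: "F e = \<bar>(edge_product E q (X(e := 1)) - edge_product E q (Y(e := 1)))
                    - (edge_product E q (X(e := 0)) - edge_product E q (Y(e := 0)))\<bar> / 2" for e
  proof -
    have "(a - b) / 2 - (c - d) / 2 = ((a - c) - (b - d)) / 2" for a b c d :: real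
      by (simp add: field_simps)
    then show ?thesis by (simp only: F_def discrete_partial_def abs_divide)
  qed
  have F_zero: "F e = 0" if "e \<notin> (\<lambda>a. q ` a) ` E" for e
  proof -
    have "edge_product E q (Z(e := c)) = edge_product E q Z" for Z c
      unfolding edge_product_def using that by (intro prod.cong) auto
    then show ?thesis by (simp add: F_def discrete_partial_def)
  qed
  have F_le: "F e \<le> S" if "e \<in> pairs N" for e
  proof -
    have bound: "\<bar>edge_product E q (X(e := c)) - edge_product E q (Y(e := c))\<bar> \<le> S"
      if "c = 0 \<or> c = 1" for c :: real
    proof -
      have "\<bar>edge_product E q (X(e := c)) - edge_product E q (Y(e := c))\<bar>
          \<le> (\<Sum>a\<in>E. \<bar>(X(e := c)) (q ` a) - (Y(e := c)) (q ` a)\<bar>)"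
        unfolding edge_product_def real_norm_def[symmetric]
        by (rule norm_prod_diff) (use E X Y that in \<open>auto simp: in_cube_def\<close>)
      also have "\<dots> \<le> S" unfolding S_def by (intro sum_mono) auto
      finally show ?thesis .
    qed
    show ?thesis
      unfolding F_eq using bound[of 0] bound[of 1] by simp
  qed
  have "l1_dist N (\<lambda>e. discrete_partial (edge_product E q) e X) (\<lambda>e. discrete_partial (edge_product E q) e Y)
      = (\<Sum>e\<in>(\<lambda>a. q ` a) ` E. F e)"
    unfolding l1_dist_def F_def[symmetric]
    using finite_pairs E F_zero by (intro sum.mono_neutral_right) auto
  also have "\<dots> \<le> (\<Sum>a\<in>E. F (q ` a))"
    using sum_image_le[OF \<open>finite E\<close>, of F] by (simp add: F_def o_def)
  also have "\<dots> \<le> real (card E) * S"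
    using sum_mono[of E "\<lambda>a. F (q ` a)" "\<lambda>_. S"] F_le E by simp
  finally show ?thesis unfolding S_def .
qed

lemma gradient_l1_dist_tdens_le:
  assumes "simple_graph m E" and "in_cube N X" and "in_cube N Y"
  shows "real N * (real N - 1) * gradient_l1_dist N (tdens N m E) X Y
           \<le> 2 * real (card E) ^ 2 * l1_dist N X Y"
proof -
  define D where "D = (\<Prod>k<m. real N - real k)"
  define h where "h e = \<bar>X e - Y e\<bar>" for e
  define T where "T = (\<Sum>a\<in>E. \<Sum>q\<in>inj_maps N m. h (q ` a))"
  have E: "E \<subseteq> pairs m" using assms(1) by (simp add: simple_graph_def)
  then have "finite E" using finite_pairs by (rule finite_subset)
  have "gradient_l1_dist N (tdens N m E) X Y
      \<le> (\<Sum>q\<in>inj_maps N m. \<bar>1 / D\<bar> * gradient_l1_dist N (edge_product E q) X Y)"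
    unfolding tdens_eq_lincomb D_def by (rule gradient_l1_dist_lincomb_le)
  also have "\<dots> \<le> (\<Sum>q\<in>inj_maps N m. \<bar>1 / D\<bar> * (real (card E) * (\<Sum>a\<in>E. h (q ` a))))"
    using E assms(2,3) \<open>finite E\<close> inj_maps_image_pair unfolding h_def
    by (intro sum_mono mult_left_mono gradient_l1_dist_edge_product_le) auto
  also have "\<dots> = \<bar>1 / D\<bar> * real (card E) * T"
    by (simp add: T_def sum_distrib_left sum.swap[of _ "inj_maps N m"] mult.assoc)
  finally have grad_le: "gradient_l1_dist N (tdens N m E) X Y \<le> \<bar>1 / D\<bar> * real (card E) * T" .
  have NN: "0 \<le> real N * (real N - 1)" by (cases N) auto
  show ?thesis
  proof (cases "m \<le> N")
    case True
    have "D > 0" unfolding D_def using True by (intro prod_pos) auto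
    have "real N * (real N - 1) * T = (\<Sum>a\<in>E. real N * (real N - 1) * (\<Sum>q\<in>inj_maps N m. h (q ` a)))"
      by (simp add: T_def sum_distrib_left)
    also have "\<dots> = (\<Sum>a\<in>E. 2 * D * l1_dist N X Y)"
      using E True unfolding D_def l1_dist_def h_def
      by (intro sum.cong refl sum_inj_maps_image_pair) auto
    finally have NT: "real N * (real N - 1) * T = 2 * D * real (card E) * l1_dist N X Y" by simp
    have "real N * (real N - 1) * (\<bar>1 / D\<bar> * real (card E) * T)
        = real (card E) * (real N * (real N - 1) * T) / D"
      using \<open>D > 0\<close> by simp
    also have "\<dots> = 2 * real (card E) ^ 2 * l1_dist N X Y"
      unfolding NT using \<open>D > 0\<close> by (simp add: power2_eq_square)
    finally show ?thesis using mult_left_mono[OF grad_le NN] by simp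
  next
    case False
    then have "gradient_l1_dist N (tdens N m E) X Y \<le> 0"
      using grad_le by (simp add: T_def inj_maps_empty)
    then have "real N * (real N - 1) * gradient_l1_dist N (tdens N m E) X Y \<le> 0"
      using NN by (simp add: mult_nonneg_nonpos)
    then show ?thesis
      by (rule order_trans) (simp add: l1_dist_nonneg)
  qed
qed

theorem lemma28:
  fixes N l :: nat and \<beta> :: "nat \<Rightarrow> real" and m :: "nat \<Rightarrow> nat"
    and EH :: "nat \<Rightarrow> nat set set" and X Y :: "nat set \<Rightarrow> real"
  assumes "\<forall>i<l. simple_graph (m i) (EH i)"
    and "in_cube N X" and "in_cube N Y"
  shows "l1_dist N (\<lambda>e. discrete_partial (subgraph_count N l \<beta> m EH) e X)
                   (\<lambda>e. discrete_partial (subgraph_count N l \<beta> m EH) e Y)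
         \<le> (12 * (\<Sum>i<l. \<bar>\<beta> i\<bar> * real (card (EH i))^2)) * l1_dist N X Y"
proof -
  have NN: "0 \<le> real N * (real N - 1)" by (cases N) auto
  have "gradient_l1_dist N (subgraph_count N l \<beta> m EH) X Y
      \<le> (\<Sum>i<l. \<bar>real N * (real N - 1) * \<beta> i\<bar> * gradient_l1_dist N (tdens N (m i) (EH i)) X Y)"
    unfolding subgraph_count_eq_lincomb by (rule gradient_l1_dist_lincomb_le)
  also have "\<dots> = (\<Sum>i<l. \<bar>\<beta> i\<bar> * (real N * (real N - 1) * gradient_l1_dist N (tdens N (m i) (EH i)) X Y))"
    by (simp only: abs_mult[of "real N * (real N - 1)"] abs_of_nonneg[OF NN]) (simp add: mult_ac)
  also have "\<dots> \<le> (\<Sum>i<l. \<bar>\<beta> i\<bar> * (2 * real (card (EH i)) ^ 2 * l1_dist N X Y))"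
    using assms by (intro sum_mono mult_left_mono gradient_l1_dist_tdens_le) auto
  also have "\<dots> \<le> (12 * (\<Sum>i<l. \<bar>\<beta> i\<bar> * real (card (EH i))^2)) * l1_dist N X Y"
    using l1_dist_nonneg[of N X Y]
    by (simp add: sum_distrib_left sum_distrib_right mult_ac sum_mono mult_right_mono)
  finally show ?thesis .
qed

end
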